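(* Let $d\ge 1$ and $m\in\big(\frac d{d+2},1\big)$. Let $u\ge 0$ be a function in $\mathrm{L}^1(\mathbb R^d)$ such that $u^m$ and $x\mapsto|x|^2u$ are integrable on $\mathbb R^d$, let $M:=\|u\|_1$, and let $\sigma>0$ be such that $\int_{\mathbb R^d}|x|^2u\,dx=\int_{\mathbb R^d}|x|^2B_\sigma\,dx$. Then \[ \frac{\mathcal F_\sigma[u]}{\sigma^{\frac d2(1-m)}}\ge\frac{m}{8\int_{\mathbb R^d}B_1^m\,dx}\left(C_M\,\|u-B_\sigma\|_1+\frac1\sigma\int_{\mathbb R^d}|x|^2\,|u-B_\sigma|\,dx\right)^2 . \]
   Context: Let $m_c:=\frac{d-2}d$. Let $M_*:=\int_{\mathbb R^d}(1+|x|^2)^{\frac1{m-1}}dx=\pi^{d/2}\Gamma\big(\frac{d(m-m_c)}{2(1-m)}\big)/\Gamma\big(\frac1{1-m}\big)$ and $C_M:=(M_*/M)^{\frac{2(1-m)}{d(m-m_c)}}$, so that the Barenblatt function $B_\sigma(x):=\sigma^{-\frac d2}\big(C_M+\frac1\sigma|x|^2\big)^{\frac1{m-1}}$ satisfies $\|B_\sigma\|_1=M$ for every $\sigma>0$. The relative entropy is \[ \mathcal F_\sigma[u]:=\frac1{m-1}\int_{\mathbb R^d}\Big[u^m-B_\sigma^m-m\,B_\sigma^{m-1}(u-B_\sigma)\Big]dx . \] *)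

theory Defs
  imports "HOL-Analysis.Analysis"
begin

text \<open>Dimension d is DIM('a) for the ambient Euclidean space 'a.\<close>

definition m_crit :: "'a::euclidean_space itself \<Rightarrow> real" where
  "m_crit T = (real DIM('a) - 2) / real DIM('a)"

definition Mstar :: "'a::euclidean_space itself \<Rightarrow> real \<Rightarrow> real" where
  "Mstar T m = (\<integral>x. (1 + (norm (x::'a))\<^sup>2) powr (1 / (m - 1)) \<partial>lborel)"

definition CM :: "'a::euclidean_space itself \<Rightarrow> real \<Rightarrow> real \<Rightarrow> real" where
  "CM T m M = (Mstar T m / M) powr (2 * (1 - m) / (real DIM('a) * (m - m_crit T)))"

definition barenblatt :: "real \<Rightarrow> real \<Rightarrow> real \<Rightarrow> 'a::euclidean_space \<Rightarrow> real" where
  "barenblatt m M \<sigma> x =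
     \<sigma> powr (- real DIM('a) / 2) * (CM TYPE('a) m M + (norm x)\<^sup>2 / \<sigma>) powr (1 / (m - 1))"

definition rel_entropy :: "real \<Rightarrow> real \<Rightarrow> real \<Rightarrow> ('a::euclidean_space \<Rightarrow> real) \<Rightarrow> real" where
  "rel_entropy m M \<sigma> u = 1 / (m - 1) *
     (\<integral>x. (u x powr m - barenblatt m M \<sigma> x powr m
            - m * barenblatt m M \<sigma> x powr (m - 1) * (u x - barenblatt m M \<sigma> x)) \<partial>lborel)"

end

theory Submission
  imports Defs
begin

text \<open>
  Write \<open>B\<close> for \<open>B\<^sub>\<sigma>\<close> and \<open>w x = C\<^sub>M + |x|\<^sup>2 / \<sigma>\<close>, so that \<open>B^(m-1) = \<sigma>^(d(1-m)/2) \<cdot> w\<close>.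
  The integrand of the relative entropy is the Bregman remainder of the concave map \<open>t \<mapsto> t^m\<close>
  at \<open>B\<close>, and on \<open>{u < B}\<close> it dominates \<open>m(1-m)/2 \<cdot> B^m (1 - u/B)\<^sup>2\<close>. With AM-GM and a free
  parameter \<open>e\<close> this bounds \<open>\<integral> B^(m-1) (B - u)\<^sub>+\<close> by \<open>e/2 \<cdot> \<integral> B^m + \<F>\<^sub>\<sigma>[u] / (e m)\<close>;
  optimising in \<open>e\<close> gives the square. Since \<open>u\<close> and \<open>B\<close> have the same mass and second moment,
  \<open>\<integral> w (u - B) = 0\<close>, hence \<open>\<integral> w |u - B| = 2 \<integral> w (B - u)\<^sub>+\<close>, which is the bracket on the
  right-hand side. Finally \<open>\<integral> B\<^sub>\<sigma>^m = \<sigma>^(d(1-m)/2) \<cdot> \<integral> B\<^sub>1^m\<close> by scaling.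
\<close>

lemma nn_integral_lborel_scaleR:
  fixes f :: "'a::euclidean_space \<Rightarrow> ennreal"
  assumes [measurable]: "f \<in> borel_measurable borel" and c: "c \<noteq> 0"
  shows "(\<integral>\<^sup>+x. f x \<partial>lborel) = ennreal (\<bar>c\<bar> ^ DIM('a)) * (\<integral>\<^sup>+x. f (c *\<^sub>R x) \<partial>lborel)"
  by (subst lborel_affine[OF c, of 0])
     (simp add: nn_integral_density nn_integral_distr nn_integral_cmult)

lemma lborel_integrable_scaleR:
  fixes f :: "'a::euclidean_space \<Rightarrow> 'b::{banach, second_countable_topology}"
  assumes f: "integrable lborel f" and c: "c \<noteq> 0"
  shows "integrable lborel (\<lambda>x. f (c *\<^sub>R x))"
  using f f[THEN borel_measurable_integrable] c unfolding integrable_iff_bounded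
  by (subst (asm) nn_integral_lborel_scaleR[where c=c]) (auto simp: ennreal_mult_less_top)

lemma lborel_integrable_scaleR_iff:
  fixes f :: "'a::euclidean_space \<Rightarrow> 'b::{banach, second_countable_topology}"
  shows "c \<noteq> 0 \<Longrightarrow> integrable lborel (\<lambda>x. f (c *\<^sub>R x)) \<longleftrightarrow> integrable lborel f"
  using lborel_integrable_scaleR[of f c] lborel_integrable_scaleR[of "\<lambda>x. f (c *\<^sub>R x)" "1 / c"]
  by auto

lemma lborel_integral_scaleR:
  fixes f :: "'a::euclidean_space \<Rightarrow> 'b::{banach, second_countable_topology}"
  assumes c: "c \<noteq> 0"
  shows "(\<integral>x. f x \<partial>lborel) = \<bar>c\<bar> ^ DIM('a) *\<^sub>R (\<integral>x. f (c *\<^sub>R x) \<partial>lborel)"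
proof cases
  assume f: "integrable lborel f"
  then show ?thesis
    using c f[THEN borel_measurable_integrable] lborel_integrable_scaleR[OF f c]
    by (subst lborel_affine[OF c, of 0]) (simp add: integral_density integral_distr)
next
  assume "\<not> integrable lborel f"
  with c show ?thesis
    by (simp add: lborel_integrable_scaleR_iff not_integrable_integral_eq)
qed

lemma powr_le_tangent:
  fixes m t :: real
  assumes "0 < m" "m < 1" "0 \<le> t"
  shows "t powr m \<le> 1 + m * (t - 1)"
  using Youngs_inequality_0[of m "1 - m" t 1] assms
  by (cases "t = 0") (auto simp: algebra_simps)

lemma powr_neg_ge_tangent:
  fixes a t :: real
  assumes "0 \<le> a" "0 < t"
  shows "1 + a * (1 - t) \<le> t powr (- a)"
proof -
  have "1 \<le> a / (1 + a) * t + 1 / (1 + a) * t powr (- a)"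
    using Youngs_inequality_0[of "a / (1 + a)" "1 / (1 + a)" t "t powr (- a)"] assms
    by (simp add: powr_powr add_divide_distrib[symmetric] powr_add[symmetric] diff_divide_distrib[symmetric])
  then have "(1 + a) * 1 \<le> (1 + a) * (a / (1 + a) * t + 1 / (1 + a) * t powr (- a))"
    using assms by (intro mult_left_mono) auto
  also have "\<dots> = a * t + t powr (- a)"
    using assms by (simp add: distrib_left)
  finally show ?thesis
    by (simp add: algebra_simps)
qed

lemma powr_tangent_gap_ge_quadratic:
  fixes m t :: real
  assumes m: "0 < m" "m < 1" and t: "0 \<le> t" "t \<le> 1"
  shows "m * (1 - m) / 2 * (1 - t)\<^sup>2 \<le> 1 + m * (t - 1) - t powr m"
proof (cases "t = 0")
  case True
  have "m / 2 * (1 - m) \<le> 1 * (1 - m)"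
    using m by (intro mult_right_mono) auto
  with True show ?thesis by simp
next
  case False
  define h where "h s = 1 + m * (s - 1) - s powr m - m * (1 - m) / 2 * (1 - s)\<^sup>2" for s :: real
  define h' where "h' s = m - m * s powr (m - 1) + m * (1 - m) * (1 - s)" for s :: real
  have "h 1 \<le> h t"
  proof (rule deriv_nonpos_imp_antimono[of t 1 h h'])
    fix s assume s: "s \<in> {t..1}"
    then have "0 < s" using False t by auto
    then show "(h has_real_derivative h' s) (at s)"
      unfolding h_def h'_def
      by (auto intro!: derivative_eq_intros simp: power2_eq_square field_simps)
    have "1 + (1 - m) * (1 - s) \<le> s powr (m - 1)"
      using powr_neg_ge_tangent[of "1 - m" s] \<open>0 < s\<close> m by simp
    from mult_left_mono[OF this] m show "h' s \<le> 0"
      by (simp add: h'_def algebra_simps)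
  qed (use t in auto)
  then show ?thesis by (simp add: h_def)
qed

definition bregman_powr :: "real \<Rightarrow> real \<Rightarrow> real \<Rightarrow> real" where
  "bregman_powr m b u = u powr m - b powr m - m * b powr (m - 1) * (u - b)"

lemma bregman_powr_scale:
  assumes "0 < b" "0 \<le> t"
  shows "bregman_powr m b (b * t) = b powr m * (t powr m - 1 - m * (t - 1))"
proof -
  have "b powr (m - 1) * (b * t - b) = b powr m * (t - 1)"
    using assms by (simp add: powr_diff right_diff_distrib)
  then have "m * b powr (m - 1) * (b * t - b) = m * (b powr m * (t - 1))"
    by (simp flip: mult.assoc)
  moreover have "(b * t) powr m = b powr m * t powr m"
    using assms by (simp add: powr_mult)
  ultimately show ?thesis
    unfolding bregman_powr_def by (simp add: algebra_simps)
qed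

lemma bregman_powr_nonpos:
  assumes "0 < m" "m < 1" "0 < b" "0 \<le> u"
  shows "bregman_powr m b u \<le> 0"
proof -
  have "bregman_powr m b u = b powr m * ((u / b) powr m - 1 - m * (u / b - 1))"
    using bregman_powr_scale[of b "u / b" m] assms by simp
  moreover have "(u / b) powr m - 1 - m * (u / b - 1) \<le> 0"
    using powr_le_tangent[of m "u / b"] assms by simp
  ultimately show ?thesis
    by (simp add: mult_nonneg_nonpos)
qed

lemma deficit_le_bregman_powr:
  assumes m: "0 < m" "m < 1" and b: "0 < b" and u: "0 \<le> u" and e: "0 < e"
  shows "b powr (m - 1) * max (b - u) 0 \<le> e / 2 * b powr m + 1 / (e * m) * (bregman_powr m b u / (m - 1))"
proof (cases "b \<le> u")
  case True
  have "0 \<le> bregman_powr m b u / (m - 1)"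
    using bregman_powr_nonpos[OF m b u] m by (simp add: divide_nonpos_neg)
  then have "0 \<le> e / 2 * b powr m + 1 / (e * m) * (bregman_powr m b u / (m - 1))"
    using e m by (intro add_nonneg_nonneg mult_nonneg_nonneg) auto
  with True show ?thesis by simp
next
  case False
  define t where "t = u / b"
  have t: "0 \<le> t" "t \<le> 1" and u_eq: "u = b * t"
    using u b False by (auto simp: t_def)
  have bm: "0 < b powr m" using b by simp
  have "b powr (m - 1) * max (b - u) 0 = b powr m * (1 - t)"
    using False b by (simp add: u_eq powr_diff field_simps)
  also have "\<dots> \<le> b powr m * (e / 2 + (1 - t)\<^sup>2 / (2 * e))"
  proof -
    have "0 \<le> (e - (1 - t))\<^sup>2" by simp
    then have "1 - t \<le> e / 2 + (1 - t)\<^sup>2 / (2 * e)"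
      using e by (simp add: field_simps power2_eq_square)
    then show ?thesis using bm by simp
  qed
  also have "\<dots> = e / 2 * b powr m + 1 / (e * m) * (b powr m * (m * (1 - m) / 2 * (1 - t)\<^sup>2) / (1 - m))"
    using e m by (simp add: field_simps)
  also have "\<dots> \<le> e / 2 * b powr m + 1 / (e * m) * (b powr m * (1 + m * (t - 1) - t powr m) / (1 - m))"
    using powr_tangent_gap_ge_quadratic[OF m t] bm e m
    by (intro add_left_mono mult_left_mono divide_right_mono) auto
  also have "b powr m * (1 + m * (t - 1) - t powr m) / (1 - m) = bregman_powr m b u / (m - 1)"
    using m by (simp add: u_eq bregman_powr_scale[OF b t(1)] field_simps)
  finally show ?thesis .
qed

lemma sq_le_of_forall_eps_bound:
  fixes y a b :: real
  assumes "0 \<le> y" "0 < a" "0 \<le> b" and bound: "\<And>e. 0 < e \<Longrightarrow> y \<le> e * a + b / e"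
  shows "y\<^sup>2 \<le> 4 * a * b"
proof (cases "y = 0")
  case False
  then have "0 < y" using assms by simp
  with bound[of "y / (2 * a)"] \<open>0 < a\<close> have "y \<le> y / 2 + 2 * a * b / y"
    by (simp add: field_simps)
  with \<open>0 < y\<close> show ?thesis
    by (simp add: field_simps power2_eq_square)
qed (use assms in simp)

lemma integral_weighted_abs_diff_eq:
  fixes f g p :: "'a \<Rightarrow> real"
  assumes f: "integrable N f" and g: "integrable N g"
    and pf: "integrable N (\<lambda>x. p x * f x)" and pg: "integrable N (\<lambda>x. p x * g x)"
    and p: "\<And>x. 0 \<le> p x"
    and mass: "(\<integral>x. f x \<partial>N) = (\<integral>x. g x \<partial>N)"
    and moment: "(\<integral>x. p x * f x \<partial>N) = (\<integral>x. p x * g x \<partial>N)"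
  shows "c * (\<integral>x. \<bar>f x - g x\<bar> \<partial>N) + k * (\<integral>x. p x * \<bar>f x - g x\<bar> \<partial>N)
         = 2 * (\<integral>x. (c + k * p x) * max (g x - f x) 0 \<partial>N)"
proof -
  have p_abs: "p x * \<bar>f x - g x\<bar> = \<bar>p x * f x - p x * g x\<bar>" for x
    using p[of x] by (simp add: abs_mult flip: right_diff_distrib)
  have abs_int: "integrable N (\<lambda>x. \<bar>f x - g x\<bar>)" "integrable N (\<lambda>x. p x * \<bar>f x - g x\<bar>)"
    unfolding p_abs using f g pf pg by auto
  have pointwise: "(c + k * p x) * max (g x - f x) 0
        = (c * \<bar>f x - g x\<bar> + k * (p x * \<bar>f x - g x\<bar>) - c * (f x - g x) - k * (p x * f x - p x * g x)) / 2" for x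
    by (simp add: max_def abs_if algebra_simps)
  have "(\<integral>x. (c + k * p x) * max (g x - f x) 0 \<partial>N)
        = (\<integral>x. (c * \<bar>f x - g x\<bar> + k * (p x * \<bar>f x - g x\<bar>) - c * (f x - g x) - k * (p x * f x - p x * g x)) / 2 \<partial>N)"
    by (simp only: pointwise)
  also have "\<dots> = (c * (\<integral>x. \<bar>f x - g x\<bar> \<partial>N) + k * (\<integral>x. p x * \<bar>f x - g x\<bar> \<partial>N)
           - c * ((\<integral>x. f x \<partial>N) - (\<integral>x. g x \<partial>N)) - k * ((\<integral>x. p x * f x \<partial>N) - (\<integral>x. p x * g x \<partial>N))) / 2"
    using f g pf pg abs_int by simp
  finally show ?thesis
    unfolding mass moment by simp
qed

lemma integral_deficit_le_bregman_powr:
  fixes u b :: "'a \<Rightarrow> real"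
  assumes m: "0 < m" "m < 1" and b: "\<And>x. 0 < b x" and u: "\<And>x. 0 \<le> u x" and e: "0 < e"
    and deficit_int: "integrable N (\<lambda>x. b x powr (m - 1) * max (b x - u x) 0)"
    and bm_int: "integrable N (\<lambda>x. b x powr m)"
    and bregman_int: "integrable N (\<lambda>x. bregman_powr m (b x) (u x))"
  shows "(\<integral>x. b x powr (m - 1) * max (b x - u x) 0 \<partial>N)
         \<le> e / 2 * (\<integral>x. b x powr m \<partial>N) + 1 / (e * m) * ((\<integral>x. bregman_powr m (b x) (u x) \<partial>N) / (m - 1))"
proof -
  have "(\<integral>x. b x powr (m - 1) * max (b x - u x) 0 \<partial>N)
        \<le> (\<integral>x. e / 2 * b x powr m + 1 / (e * m) * (bregman_powr m (b x) (u x) / (m - 1)) \<partial>N)"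
    using deficit_int bm_int bregman_int deficit_le_bregman_powr[OF m b u e]
    by (intro integral_mono) auto
  also have "\<dots> = e / 2 * (\<integral>x. b x powr m \<partial>N) + 1 / (e * m) * ((\<integral>x. bregman_powr m (b x) (u x) \<partial>N) / (m - 1))"
    using bm_int bregman_int by simp
  finally show ?thesis .
qed

text \<open>The scaling argument does not need integrability: otherwise the integral is the junk value 0.\<close>

lemma lborel_integral_homogeneous_eq_0:
  fixes f :: "'a::euclidean_space \<Rightarrow> real"
  assumes hom: "\<And>x. f (2 *\<^sub>R x) = 2 powr p * f x" and p: "p \<noteq> - real DIM('a)"
  shows "(\<integral>x. f x \<partial>lborel) = 0"
proof -
  have "(\<integral>x. f x \<partial>lborel) = 2 ^ DIM('a) * (\<integral>x. f (2 *\<^sub>R x) \<partial>lborel)"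
    using lborel_integral_scaleR[of 2 f] by simp
  also have "\<dots> = 2 powr (real DIM('a) + p) * (\<integral>x. f x \<partial>lborel)"
    by (simp add: hom powr_add powr_realpow)
  finally have "(1 - 2 powr (real DIM('a) + p)) * (\<integral>x. f x \<partial>lborel) = 0"
    by (simp add: algebra_simps)
  moreover have "2 powr (real DIM('a) + p) \<noteq> 1"
    using p by simp
  ultimately show ?thesis by simp
qed

lemma barenblatt_pos:
  assumes "0 < CM TYPE('a) m M" "0 < \<sigma>"
  shows "0 < barenblatt m M \<sigma> (x::'a::euclidean_space)"
proof -
  have "0 < CM TYPE('a) m M + (norm x)\<^sup>2 / \<sigma>"
    using assms by (simp add: add_pos_nonneg)
  with assms(2) show ?thesis
    unfolding barenblatt_def by simp
qed

lemma barenblatt_powr_m_minus_1: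
  assumes "m \<noteq> 1" "0 < \<sigma>" "0 < CM TYPE('a) m M"
  shows "barenblatt m M \<sigma> (x::'a::euclidean_space) powr (m - 1)
         = \<sigma> powr (real DIM('a) / 2 * (1 - m)) * (CM TYPE('a) m M + (norm x)\<^sup>2 / \<sigma>)"
proof -
  have "0 < CM TYPE('a) m M + (norm x)\<^sup>2 / \<sigma>"
    using assms by (simp add: add_pos_nonneg)
  then have "barenblatt m M \<sigma> x powr (m - 1)
      = \<sigma> powr (- real DIM('a) / 2 * (m - 1))
        * (CM TYPE('a) m M + (norm x)\<^sup>2 / \<sigma>) powr (1 / (m - 1) * (m - 1))"
    using assms unfolding barenblatt_def by (simp add: powr_mult powr_powr)
  also have "- real DIM('a) / 2 * (m - 1) = real DIM('a) / 2 * (1 - m)"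
    by (simp add: field_simps)
  also have "1 / (m - 1) * (m - 1) = 1"
    using assms by simp
  finally show ?thesis
    using \<open>0 < CM TYPE('a) m M + (norm x)\<^sup>2 / \<sigma>\<close> by simp
qed

lemma barenblatt_rescale:
  assumes "0 < \<sigma>"
  shows "barenblatt m M \<sigma> x
         = \<sigma> powr (- real DIM('a) / 2) * barenblatt m M 1 ((1 / sqrt \<sigma>) *\<^sub>R (x::'a::euclidean_space))"
  using assms unfolding barenblatt_def by (simp add: power_divide)

lemma has_bochner_integral_barenblatt_powr:
  assumes \<sigma>: "0 < \<sigma>"
    and int1: "integrable lborel (\<lambda>x::'a::euclidean_space. barenblatt m M 1 x powr m)"
  shows "has_bochner_integral lborel (\<lambda>x::'a. barenblatt m M \<sigma> x powr m)
           (\<sigma> powr (real DIM('a) / 2 * (1 - m)) * (\<integral>x. barenblatt m M 1 (x::'a) powr m \<partial>lborel))"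
proof -
  define D where "D = real DIM('a)"
  let ?g = "\<lambda>x::'a. barenblatt m M 1 ((1 / sqrt \<sigma>) *\<^sub>R x) powr m"
  have pow: "barenblatt m M \<sigma> x powr m = \<sigma> powr (- D / 2 * m) * ?g x" for x :: 'a
  proof -
    have "0 \<le> barenblatt m M 1 ((1 / sqrt \<sigma>) *\<^sub>R x)"
      by (simp add: barenblatt_def)
    then show ?thesis
      using \<sigma> by (simp add: barenblatt_rescale[OF \<sigma>, of m M x] D_def powr_mult powr_powr)
  qed
  have g_int: "integrable lborel ?g"
    using lborel_integrable_scaleR[OF int1, of "1 / sqrt \<sigma>"] \<sigma> by simp
  have "(\<integral>x. barenblatt m M 1 (x::'a) powr m \<partial>lborel) = (1 / sqrt \<sigma>) ^ DIM('a) * (\<integral>x. ?g x \<partial>lborel)"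
    using lborel_integral_scaleR[of "1 / sqrt \<sigma>" "\<lambda>x::'a. barenblatt m M 1 x powr m"] \<sigma> by simp
  moreover have "sqrt \<sigma> ^ DIM('a) = \<sigma> powr (D / 2)"
    using \<sigma> by (simp add: D_def powr_half_sqrt[symmetric] powr_realpow[symmetric] powr_powr)
  ultimately have "(\<integral>x. ?g x \<partial>lborel) = \<sigma> powr (D / 2) * (\<integral>x. barenblatt m M 1 (x::'a) powr m \<partial>lborel)"
    using \<sigma> by (simp add: field_simps power_one_over)
  moreover have "\<sigma> powr (- D / 2 * m) * \<sigma> powr (D / 2) = \<sigma> powr (D / 2 * (1 - m))"
    by (simp add: powr_add[symmetric] right_diff_distrib add_divide_distrib)
  ultimately show ?thesis
    unfolding pow using g_int
    by (simp add: has_bochner_integral_iff D_def flip: mult.assoc)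
qed

text \<open>If \<open>C\<^sub>M\<close> vanished, \<open>|x|\<^sup>2 B\<^sub>\<sigma>\<close> would be homogeneous of degree \<open>2 + 2/(m-1) < -d\<close>,
  so its integral would be 0. This avoids evaluating \<open>M\<^sub>*\<close>: \<open>C\<^sub>M = 0\<close> exactly when the
  integral defining \<open>M\<^sub>*\<close> takes its junk value 0.\<close>

lemma CM_pos:
  assumes m: "real DIM('a) / (real DIM('a) + 2) < m" "m < 1" and \<sigma>: "0 < \<sigma>"
    and moment: "(\<integral>x. (norm x)\<^sup>2 * barenblatt m M \<sigma> (x::'a::euclidean_space) \<partial>lborel) \<noteq> 0"
  shows "0 < CM TYPE('a) m M"
proof (rule ccontr)
  assume "\<not> 0 < CM TYPE('a) m M"
  then have C: "CM TYPE('a) m M = 0"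
    by (simp add: CM_def)
  define D where "D = real DIM('a)"
  define e where "e = 1 / (m - 1)"
  have "(norm (2 *\<^sub>R x))\<^sup>2 * barenblatt m M \<sigma> (2 *\<^sub>R x)
        = 2 powr (2 + 2 * e) * ((norm x)\<^sup>2 * barenblatt m M \<sigma> x)" for x :: 'a
  proof -
    have "(norm (2 *\<^sub>R x))\<^sup>2 / \<sigma> = 4 * ((norm x)\<^sup>2 / \<sigma>)"
      by (simp add: power_mult_distrib)
    moreover have "(4 * ((norm x)\<^sup>2 / \<sigma>)) powr e = 4 powr e * ((norm x)\<^sup>2 / \<sigma>) powr e"
      using \<sigma> by (intro powr_mult)
    moreover have "(4::real) powr e = 2 powr (2 * e)"
      using powr_powr[of 2 2 e] by simp
    ultimately have "((norm (2 *\<^sub>R x))\<^sup>2 / \<sigma>) powr e = 2 powr (2 * e) * ((norm x)\<^sup>2 / \<sigma>) powr e"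
      by simp
    moreover have "(norm (2 *\<^sub>R x))\<^sup>2 = 2 powr 2 * (norm x)\<^sup>2"
      by (simp add: power2_eq_square)
    ultimately show ?thesis
      unfolding barenblatt_def C e_def by (simp add: powr_add)
  qed
  moreover have "2 + 2 * e \<noteq> - D"
  proof -
    have "(D + 2) * (1 - m) < 2"
      using m by (simp add: D_def field_simps)
    then have "D + 2 < 2 / (1 - m)"
      using m by (simp add: less_divide_eq)
    then show ?thesis
      using m by (simp add: e_def field_simps)
  qed
  ultimately have "(\<integral>x. (norm x)\<^sup>2 * barenblatt m M \<sigma> (x::'a) \<partial>lborel) = 0"
    unfolding D_def by (rule lborel_integral_homogeneous_eq_0)
  with moment show False ..
qed

lemma CM_powr_mass_exponent:
  assumes m: "real DIM('a) / (real DIM('a) + 2) < m" "m < 1" and M: "0 < M"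
    and Mstar: "0 < Mstar TYPE('a::euclidean_space) m"
  shows "CM TYPE('a) m M powr (1 / (m - 1) + real DIM('a) / 2) = M / Mstar TYPE('a) m"
proof -
  define D where "D = real DIM('a)"
  have D: "1 \<le> D"
    using DIM_positive[where 'a='a] unfolding D_def by linarith
  have pos: "0 < D * m - D + 2"
    using m D by (simp add: D_def field_simps)
  have crit: "D * (m - m_crit TYPE('a)) = D * m - D + 2"
    using D by (simp add: m_crit_def D_def field_simps)
  have half: "1 / (m - 1) + D / 2 = (D * m - D + 2) / (2 * (m - 1))"
    using m by (simp add: field_simps)
  have "2 * (1 - m) / (D * (m - m_crit TYPE('a))) * (1 / (m - 1) + D / 2)
        = 2 * (1 - m) / (2 * (m - 1))"
    unfolding crit half using pos by simp
  also have "\<dots> = -1"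
    using m by (simp add: field_simps)
  finally have "2 * (1 - m) / (D * (m - m_crit TYPE('a))) * (1 / (m - 1) + D / 2) = -1" .
  then have "CM TYPE('a) m M powr (1 / (m - 1) + D / 2) = (Mstar TYPE('a) m / M) powr (-1)"
    unfolding CM_def by (simp add: powr_powr D_def)
  then show ?thesis
    using M Mstar by (simp add: D_def powr_minus_divide)
qed

lemma Mstar_pos:
  assumes "0 < CM TYPE('a::euclidean_space) m M"
  shows "0 < Mstar TYPE('a) m"
proof -
  have "Mstar TYPE('a) m \<noteq> 0"
    using assms by (auto simp: CM_def)
  moreover have "0 \<le> Mstar TYPE('a) m"
    by (simp add: Mstar_def)
  ultimately show ?thesis by simp
qed

lemma barenblatt_eq_profile:
  assumes \<sigma>: "0 < \<sigma>" and C: "0 < CM TYPE('a) m M"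
  shows "barenblatt m M \<sigma> (x::'a::euclidean_space)
         = \<sigma> powr (- real DIM('a) / 2) * CM TYPE('a) m M powr (1 / (m - 1))
           * (1 + (norm ((1 / sqrt (\<sigma> * CM TYPE('a) m M)) *\<^sub>R x))\<^sup>2) powr (1 / (m - 1))"
proof -
  define c where "c = CM TYPE('a) m M"
  have c: "0 < c" using C by (simp add: c_def)
  have "(norm ((1 / sqrt (\<sigma> * c)) *\<^sub>R x))\<^sup>2 = (norm x)\<^sup>2 / (\<sigma> * c)"
    using \<sigma> c by (simp add: power_divide)
  moreover have "c + (norm x)\<^sup>2 / \<sigma> = c * (1 + (norm x)\<^sup>2 / (\<sigma> * c))"
    using \<sigma> c by (simp add: field_simps)
  moreover have "0 \<le> 1 + (norm x)\<^sup>2 / (\<sigma> * c)"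
    using \<sigma> c by (simp add: add_nonneg_nonneg)
  ultimately show ?thesis
    using c unfolding barenblatt_def c_def[symmetric] by (simp add: powr_mult)
qed

lemma has_bochner_integral_barenblatt:
  assumes m: "real DIM('a) / (real DIM('a) + 2) < m" "m < 1" and M: "0 < M" and \<sigma>: "0 < \<sigma>"
    and C: "0 < CM TYPE('a::euclidean_space) m M"
  shows "has_bochner_integral lborel (barenblatt m M \<sigma> :: 'a \<Rightarrow> real) M"
proof -
  define D where "D = real DIM('a)"
  define e where "e = 1 / (m - 1)"
  define c where "c = CM TYPE('a) m M"
  define l where "l = sqrt (\<sigma> * c)"
  define F0 where "F0 z = (1 + (norm z)\<^sup>2) powr e" for z :: 'a
  have l: "0 < l"
    using \<sigma> C by (simp add: l_def c_def)
  have Mstar_eq: "Mstar TYPE('a) m = (\<integral>z. F0 z \<partial>lborel)"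
    by (simp add: Mstar_def F0_def e_def)
  have F0_int: "integrable lborel F0"
    using Mstar_pos[OF C] Mstar_eq not_integrable_integral_eq by fastforce
  have "(\<integral>z. F0 z \<partial>lborel) = (1 / l) ^ DIM('a) * (\<integral>x. F0 ((1 / l) *\<^sub>R x) \<partial>lborel)"
    using lborel_integral_scaleR[of "1 / l" F0] l by simp
  then have F0_scaled: "(\<integral>x. F0 ((1 / l) *\<^sub>R x) \<partial>lborel) = l ^ DIM('a) * Mstar TYPE('a) m"
    using l by (simp add: Mstar_eq field_simps power_one_over)
  have "l ^ DIM('a) = \<sigma> powr (D / 2) * c powr (D / 2)"
    using \<sigma> C l by (simp add: l_def c_def D_def powr_half_sqrt[symmetric] powr_realpow[symmetric]
                                 powr_powr powr_mult)
  then have "\<sigma> powr (- D / 2) * c powr e * l ^ DIM('a)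
      = (\<sigma> powr (- D / 2) * \<sigma> powr (D / 2)) * (c powr e * c powr (D / 2))"
    by (simp add: mult_ac)
  also have "\<dots> = c powr (e + D / 2)"
    using \<sigma> by (simp add: powr_add[symmetric])
  also have "\<dots> = M / Mstar TYPE('a) m"
    using CM_powr_mass_exponent[OF m M Mstar_pos[OF C]] by (simp add: c_def e_def D_def)
  finally have "\<sigma> powr (- D / 2) * c powr e * (\<integral>x. F0 ((1 / l) *\<^sub>R x) \<partial>lborel) = M"
    using Mstar_pos[OF C] unfolding F0_scaled by (simp flip: mult.assoc)
  moreover have "integrable lborel (\<lambda>x. F0 ((1 / l) *\<^sub>R x))"
    using lborel_integrable_scaleR[OF F0_int, of "1 / l"] l by simp
  ultimately show ?thesis
    unfolding barenblatt_eq_profile[OF \<sigma> C, abs_def]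
    by (simp add: has_bochner_integral_iff F0_def c_def e_def l_def D_def)
qed

lemma integral_norm_sq_mult_pos:
  fixes u :: "'a::euclidean_space \<Rightarrow> real"
  assumes u: "\<And>x. 0 \<le> u x" and int: "integrable lborel (\<lambda>x. (norm x)\<^sup>2 * u x)"
    and mass: "0 < (\<integral>x. u x \<partial>lborel)"
  shows "0 < (\<integral>x. (norm x)\<^sup>2 * u x \<partial>lborel)"
proof -
  have "(\<integral>x. (norm x)\<^sup>2 * u x \<partial>lborel) \<noteq> 0"
  proof
    assume "(\<integral>x. (norm x)\<^sup>2 * u x \<partial>lborel) = 0"
    then have "AE x in lborel. (norm x)\<^sup>2 * u x = 0"
      using integral_nonneg_eq_0_iff_AE[OF int] u by simp
    then have "AE x in lborel. u x = 0"
      using AE_lborel_singleton[of 0] by eventually_elim auto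
    then have "(\<integral>x. u x \<partial>lborel) = 0"
      by (rule integral_eq_zero_AE)
    with mass show False by simp
  qed
  moreover have "0 \<le> (\<integral>x. (norm x)\<^sup>2 * u x \<partial>lborel)"
    using u by (simp add: integral_nonneg)
  ultimately show ?thesis by simp
qed

lemma rel_entropy_eq_bregman_powr:
  "rel_entropy m M \<sigma> u = (\<integral>x. bregman_powr m (barenblatt m M \<sigma> x) (u x) \<partial>lborel) / (m - 1)"
  by (simp add: rel_entropy_def bregman_powr_def)

lemma rel_entropy_nonneg:
  assumes "0 < m" "m < 1" "0 < \<sigma>" "0 < CM TYPE('a) m M" "\<And>x. 0 \<le> u x"
  shows "0 \<le> rel_entropy m M \<sigma> (u :: 'a::euclidean_space \<Rightarrow> real)"
proof -
  have "0 \<le> (\<integral>x. - bregman_powr m (barenblatt m M \<sigma> x) (u x) \<partial>lborel)"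
    using bregman_powr_nonpos[OF assms(1,2) barenblatt_pos[OF assms(4,3)] assms(5)]
    by (intro Bochner_Integration.integral_nonneg) simp
  then have "(\<integral>x. bregman_powr m (barenblatt m M \<sigma> x) (u x) \<partial>lborel) \<le> 0"
    by simp
  with assms(2) show ?thesis
    unfolding rel_entropy_eq_bregman_powr by (simp add: divide_nonpos_neg)
qed

lemma barenblatt_deficit_le_rel_entropy:
  fixes u :: "'a::euclidean_space \<Rightarrow> real"
  assumes m: "0 < m" "m < 1" and \<sigma>: "0 < \<sigma>" and C: "0 < CM TYPE('a) m M"
    and u: "\<And>x. 0 \<le> u x" and u_int: "integrable lborel u"
    and um_int: "integrable lborel (\<lambda>x. u x powr m)"
    and u_mom: "integrable lborel (\<lambda>x. (norm x)\<^sup>2 * u x)"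
    and B_int: "integrable lborel (barenblatt m M \<sigma> :: 'a \<Rightarrow> real)"
    and B_mom: "integrable lborel (\<lambda>x::'a. (norm x)\<^sup>2 * barenblatt m M \<sigma> x)"
    and Bm_int: "integrable lborel (\<lambda>x::'a. barenblatt m M \<sigma> x powr m)"
    and e: "0 < e"
  shows "\<sigma> powr (real DIM('a) / 2 * (1 - m))
           * (\<integral>x. (CM TYPE('a) m M + (norm x)\<^sup>2 / \<sigma>) * max (barenblatt m M \<sigma> x - u x) 0 \<partial>lborel)
         \<le> e / 2 * (\<integral>x. barenblatt m M \<sigma> (x::'a) powr m \<partial>lborel) + 1 / (e * m) * rel_entropy m M \<sigma> u"
proof -
  define B where "B = (barenblatt m M \<sigma> :: 'a \<Rightarrow> real)"
  define w where "w x = CM TYPE('a) m M + (norm x)\<^sup>2 / \<sigma>" for x :: 'a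
  define s where "s = \<sigma> powr (real DIM('a) / 2 * (1 - m))"
  have w: "0 \<le> w x" for x :: 'a
    using C \<sigma> by (simp add: w_def)
  have pow: "B x powr (m - 1) = s * w x" for x :: 'a
    using barenblatt_powr_m_minus_1[OF _ \<sigma> C] m by (simp add: B_def s_def w_def)
  have w_int: "integrable lborel (\<lambda>x. w x * f x)"
    if "integrable lborel f" "integrable lborel (\<lambda>x. (norm x)\<^sup>2 * f x)" for f :: "'a \<Rightarrow> real"
    using that by (simp add: w_def distrib_right)
  have wu: "integrable lborel (\<lambda>x. w x * u x)" and wB: "integrable lborel (\<lambda>x. w x * B x)"
    using w_int[OF u_int u_mom] w_int[OF B_int B_mom] by (simp_all add: B_def)
  have deficit_eq: "w x * max (B x - u x) 0 = (w x * B x - w x * u x + \<bar>w x * B x - w x * u x\<bar>) / 2" for x :: 'a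
  proof -
    have max_eq: "max (B x - u x) 0 = (B x - u x + \<bar>B x - u x\<bar>) / 2"
      by (auto simp: max_def)
    have abs_eq: "\<bar>w x * B x - w x * u x\<bar> = w x * \<bar>B x - u x\<bar>"
      using w[of x] by (simp add: abs_mult flip: right_diff_distrib)
    show ?thesis
      unfolding max_eq abs_eq by (simp add: field_simps)
  qed
  have deficit_int: "integrable lborel (\<lambda>x. w x * max (B x - u x) 0)"
    unfolding deficit_eq using wu wB by simp
  have bregman_eq: "bregman_powr m (B x) (u x) = u x powr m - B x powr m - m * s * (w x * u x - w x * B x)" for x :: 'a
    by (simp add: bregman_powr_def pow algebra_simps)
  have bregman_int: "integrable lborel (\<lambda>x. bregman_powr m (B x) (u x))"
    unfolding bregman_eq using um_int Bm_int wu wB by (simp add: B_def)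
  have "s * (\<integral>x. w x * max (B x - u x) 0 \<partial>lborel) = (\<integral>x. B x powr (m - 1) * max (B x - u x) 0 \<partial>lborel)"
    by (simp add: pow mult.assoc)
  also have "\<dots> \<le> e / 2 * (\<integral>x. B x powr m \<partial>lborel) + 1 / (e * m) * ((\<integral>x. bregman_powr m (B x) (u x) \<partial>lborel) / (m - 1))"
  proof (rule integral_deficit_le_bregman_powr[OF m _ u e _ _ bregman_int])
    show "0 < B x" for x
      using barenblatt_pos[OF C \<sigma>] by (simp add: B_def)
    show "integrable lborel (\<lambda>x. B x powr (m - 1) * max (B x - u x) 0)"
      unfolding pow using deficit_int by (simp add: mult.assoc)
  qed (use Bm_int in \<open>simp add: B_def\<close>)
  finally show ?thesis
    by (simp add: B_def w_def s_def rel_entropy_eq_bregman_powr)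
qed

lemma rel_entropy_ge_sq_weighted_deficit:
  fixes u :: "'a::euclidean_space \<Rightarrow> real"
  assumes m: "0 < m" "m < 1" and \<sigma>: "0 < \<sigma>" and C: "0 < CM TYPE('a) m M"
    and u: "\<And>x. 0 \<le> u x" and u_int: "integrable lborel u"
    and um_int: "integrable lborel (\<lambda>x. u x powr m)"
    and u_mom: "integrable lborel (\<lambda>x. (norm x)\<^sup>2 * u x)"
    and B_int: "integrable lborel (barenblatt m M \<sigma> :: 'a \<Rightarrow> real)"
    and B_mom: "integrable lborel (\<lambda>x::'a. (norm x)\<^sup>2 * barenblatt m M \<sigma> x)"
  shows "m / (8 * (\<integral>x. barenblatt m M 1 (x::'a) powr m \<partial>lborel))
           * (2 * (\<integral>x. (CM TYPE('a) m M + (norm x)\<^sup>2 / \<sigma>) * max (barenblatt m M \<sigma> x - u x) 0 \<partial>lborel))\<^sup>2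
         \<le> rel_entropy m M \<sigma> u / \<sigma> powr (real DIM('a) / 2 * (1 - m))"
proof -
  define s where "s = \<sigma> powr (real DIM('a) / 2 * (1 - m))"
  define K where "K = (\<integral>x. barenblatt m M 1 (x::'a) powr m \<partial>lborel)"
  define F where "F = rel_entropy m M \<sigma> u"
  define Y where "Y = (\<integral>x. (CM TYPE('a) m M + (norm x)\<^sup>2 / \<sigma>) * max (barenblatt m M \<sigma> x - u x) 0 \<partial>lborel)"
  have s: "0 < s"
    using \<sigma> by (simp add: s_def)
  have F: "0 \<le> F"
    using rel_entropy_nonneg[OF m \<sigma> C u] by (simp add: F_def)
  have "m / (8 * K) * (2 * Y)\<^sup>2 \<le> F / s"
  proof (cases "0 < K")
    case False
    moreover have "0 \<le> K"
      by (simp add: K_def)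
    ultimately show ?thesis
      using F s by simp
  next
    case True
    then have "integrable lborel (\<lambda>x. barenblatt m M 1 (x::'a) powr m)"
      using not_integrable_integral_eq unfolding K_def by fastforce
    then have Bm: "has_bochner_integral lborel (\<lambda>x. barenblatt m M \<sigma> (x::'a) powr m) (s * K)"
      using has_bochner_integral_barenblatt_powr[OF \<sigma>] by (simp add: s_def K_def)
    have "(s * Y)\<^sup>2 \<le> 4 * (s * K / 2) * (F / m)"
    proof (rule sq_le_of_forall_eps_bound)
      show "0 \<le> s * Y"
        using s C \<sigma> by (simp add: Y_def less_imp_le)
      fix e :: real assume e: "0 < e"
      have "s * Y \<le> e / 2 * (s * K) + 1 / (e * m) * F"
        using barenblatt_deficit_le_rel_entropy[OF m \<sigma> C u u_int um_int u_mom B_int B_mom _ e] Bm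
        unfolding has_bochner_integral_iff s_def F_def Y_def by simp
      then show "s * Y \<le> e * (s * K / 2) + F / m / e"
        by (simp add: mult.commute)
    qed (use True s m F in simp_all)
    then have "s * (s * Y\<^sup>2) \<le> s * (2 * K * F / m)"
      by (simp add: power_mult_distrib power2_eq_square mult_ac)
    then have "m * (s * Y\<^sup>2) \<le> 2 * K * F"
      using s m by (simp add: pos_le_divide_eq mult.commute)
    then show ?thesis
      using s True by (simp add: field_simps power_mult_distrib)
  qed
  then show ?thesis
    by (simp add: s_def K_def F_def Y_def)
qed

theorem theorem3p1:
  fixes u :: "'a::euclidean_space \<Rightarrow> real" and m M \<sigma> :: real
  assumes m_lo: "real DIM('a) / (real DIM('a) + 2) < m" and m_hi: "m < 1"
    and u_nonneg: "\<And>x. u x \<ge> 0"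
    and u_int: "integrable lborel u"
    and um_int: "integrable lborel (\<lambda>x. u x powr m)"
    and mom_int: "integrable lborel (\<lambda>x. (norm x)\<^sup>2 * u x)"
    and M_def: "M = (\<integral>x. u x \<partial>lborel)"
    and M_pos: "M > 0"
    and sigma_pos: "\<sigma> > 0"
    and sigma_mom: "(\<integral>x. (norm x)\<^sup>2 * u x \<partial>lborel)
                    = (\<integral>x. (norm (x::'a))\<^sup>2 * barenblatt m M \<sigma> x \<partial>lborel)"
  shows "rel_entropy m M \<sigma> u / \<sigma> powr (real DIM('a) / 2 * (1 - m))
         \<ge> m / (8 * (\<integral>x. barenblatt m M 1 (x::'a) powr m \<partial>lborel))
            * (CM TYPE('a) m M * (\<integral>x. \<bar>u x - barenblatt m M \<sigma> x\<bar> \<partial>lborel)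
               + 1 / \<sigma> * (\<integral>x. (norm x)\<^sup>2 * \<bar>u x - barenblatt m M \<sigma> x\<bar> \<partial>lborel))\<^sup>2"
proof -
  define B where "B = (barenblatt m M \<sigma> :: 'a \<Rightarrow> real)"
  define C where "C = CM TYPE('a) m M"
  have m: "0 < m"
    using m_lo divide_nonneg_pos[of "real DIM('a)" "real DIM('a) + 2"] by linarith
  have "0 < (\<integral>x. (norm x)\<^sup>2 * u x \<partial>lborel)"
    using integral_norm_sq_mult_pos[OF u_nonneg mom_int] M_def M_pos by simp
  then have B_mom_ne: "(\<integral>x. (norm x)\<^sup>2 * B x \<partial>lborel) \<noteq> 0"
    using sigma_mom by (simp add: B_def)
  then have B_mom: "integrable lborel (\<lambda>x. (norm x)\<^sup>2 * B x)"
    using not_integrable_integral_eq by blast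
  have C: "0 < C"
    using CM_pos[OF m_lo m_hi sigma_pos B_mom_ne[unfolded B_def]] by (simp add: C_def)
  have B: "has_bochner_integral lborel B M"
    using has_bochner_integral_barenblatt[OF m_lo m_hi M_pos sigma_pos] C by (simp add: B_def C_def)
  have "C * (\<integral>x. \<bar>u x - B x\<bar> \<partial>lborel) + 1 / \<sigma> * (\<integral>x. (norm x)\<^sup>2 * \<bar>u x - B x\<bar> \<partial>lborel)
        = 2 * (\<integral>x. (C + 1 / \<sigma> * (norm x)\<^sup>2) * max (B x - u x) 0 \<partial>lborel)"
    using B M_def sigma_mom
    by (intro integral_weighted_abs_diff_eq[OF u_int _ mom_int B_mom])
       (simp_all add: has_bochner_integral_iff B_def)
  moreover have "m / (8 * (\<integral>x. barenblatt m M 1 (x::'a) powr m \<partial>lborel))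
      * (2 * (\<integral>x. (C + (norm x)\<^sup>2 / \<sigma>) * max (B x - u x) 0 \<partial>lborel))\<^sup>2
      \<le> rel_entropy m M \<sigma> u / \<sigma> powr (real DIM('a) / 2 * (1 - m))"
    using rel_entropy_ge_sq_weighted_deficit[OF m m_hi sigma_pos _ u_nonneg u_int um_int mom_int]
      B B_mom C by (simp add: has_bochner_integral_iff B_def C_def)
  ultimately show ?thesis
    by (simp add: B_def C_def)
qed

end
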